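(* For any $P,N>0$ with $\frac NP\le\frac{L-1}{L}$ and any $L\in\mathbb{Z}_{\ge2}$, $$\overline{C}_{L-1}(P,N)\ge\frac12\left(1-\frac{LN}{(L-1)P}-\frac1{L-1}\ln\frac{L(P-N)}{P}\right).$$
   Context: $\mathcal{B}^n(r)$ is the closed Euclidean ball of radius $r$ centered at the origin. For $x_1,\dots,x_L\in\mathbb{R}^n$ with centroid $\bar x=\frac1L\sum_ix_i$, $\overline{\mathrm{rad}}^2(x_1,\dots,x_L)=\frac1L\sum_i\|x_i-\bar x\|_2^2$. A finite $\mathcal{C}\subseteq\mathcal{B}^n(\sqrt{nP})$ is $(P,N,L-1)$-average-radius list-decodable if every $L$ distinct points of $\mathcal{C}$ have $\overline{\mathrm{rad}}^2>nN$. Rate $R(\mathcal{C})=\frac1n\ln|\mathcal{C}|$. $\overline{C}_{L-1}(P,N)=\limsup_{n\to\infty}\sup R(\mathcal{C})$ over such codes in $\mathcal{B}^n(\sqrt{nP})$. *)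

theory Defs
  imports "HOL-Analysis.Analysis"
begin

text \<open>Points of R^n are represented as functions nat => real that vanish
  outside {0..<n} (extensional representation).\<close>

definition sqnorm :: "nat \<Rightarrow> (nat \<Rightarrow> real) \<Rightarrow> real" where
  "sqnorm n x = (\<Sum>i<n. (x i)\<^sup>2)"

definition euclid_ball :: "nat \<Rightarrow> real \<Rightarrow> (nat \<Rightarrow> real) set" where
  "euclid_ball n r = {x. (\<forall>i\<ge>n. x i = 0) \<and> sqrt (sqnorm n x) \<le> r}"

definition centroid :: "nat \<Rightarrow> (nat \<Rightarrow> real) set \<Rightarrow> (nat \<Rightarrow> real)" where
  "centroid n S = (\<lambda>i. if i < n then (\<Sum>x\<in>S. x i) / real (card S) else 0)"

definition avg_rad_sq :: "nat \<Rightarrow> (nat \<Rightarrow> real) set \<Rightarrow> real" where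
  "avg_rad_sq n S = (\<Sum>x\<in>S. sqnorm n (\<lambda>i. x i - centroid n S i)) / real (card S)"

text \<open>(P,N,L-1)-average-radius list-decodable code in B^n(sqrt(nP)).\<close>
definition avg_rad_list_decodable ::
  "nat \<Rightarrow> real \<Rightarrow> real \<Rightarrow> nat \<Rightarrow> (nat \<Rightarrow> real) set \<Rightarrow> bool" where
  "avg_rad_list_decodable n P N L C \<longleftrightarrow>
     finite C \<and> C \<subseteq> euclid_ball n (sqrt (real n * P)) \<and>
     (\<forall>S\<subseteq>C. card S = L \<longrightarrow> avg_rad_sq n S > real n * N)"

definition code_rate :: "nat \<Rightarrow> (nat \<Rightarrow> real) set \<Rightarrow> real" where
  "code_rate n C = ln (real (card C)) / real n"

definition avg_rad_capacity :: "nat \<Rightarrow> real \<Rightarrow> real \<Rightarrow> ereal" where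
  "avg_rad_capacity L P N =
     limsup (\<lambda>n. SUP C \<in> {C. avg_rad_list_decodable n P N L C}. ereal (code_rate n C))"

end

theory Submission
  imports Defs "HOL-Real_Asymp.Real_Asymp"
begin

(* Random coding with expurgation over the cube {-r, r}^n, r = sqrt P. For L points of the cube
  the average radius is nP minus the squared norm of the centroid, so a list is bad exactly when
  its column sums s_k = sum_j x_j k satisfy sum_k s_k^2 >= L^2 n (P - N). Each column is a
  Rademacher sum, whose moments are dominated by those of a Gaussian of the same variance; this
  gives sum_v exp (lam s^2 / (L P)) <= 2^L (1 - 2 lam) powr (-1/2) over the sign vectors v.
  The n columns of an L-tuple are independent, so a Chernoff bound with the optimal lam shows
  that at most a fraction exp (-n (a - 1 - ln a) / 2) of all L-tuples are bad, a = L (P - N) / P.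
  Among 2^n codewords, some m-subset with m ~ exp (n tau) / 2, tau = (a - 1 - ln a) / (2 (L - 1)),
  contains at most m / 2 bad lists; deleting one point of each leaves a list-decodable code
  of rate tau - O(1 / n). *)

section \<open>Moments of Rademacher sums\<close>

definition sign_vectors :: "nat \<Rightarrow> real \<Rightarrow> (nat \<Rightarrow> real) set" where
  "sign_vectors L r = (\<Pi>\<^sub>E j\<in>{..<L}. {r, -r})"

lemma finite_sign_vectors [simp]: "finite (sign_vectors L r)"
  by (simp add: sign_vectors_def finite_PiE)

lemma sum_sign_vectors_Suc:
  assumes "r \<noteq> 0"
  shows "(\<Sum>v\<in>sign_vectors (Suc L) r. f v) =
         (\<Sum>v\<in>sign_vectors L r. f (v(L := r)) + f (v(L := -r)))"
proof -
  have "(\<Sum>v\<in>sign_vectors (Suc L) r. f v) = (\<Sum>(y, v)\<in>{r, -r} \<times> sign_vectors L r. f (v(L := y)))"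
    unfolding sign_vectors_def lessThan_Suc
    by (intro sum.reindex_bij_witness[of _ "\<lambda>(y, v). v(L := y)" "\<lambda>v. (v L, v(L := undefined))"])
       (auto simp: PiE_def extensional_def)
  also have "\<dots> = (\<Sum>v\<in>sign_vectors L r. f (v(L := r)) + f (v(L := -r)))"
    using assms by (simp add: sum.cartesian_product[symmetric] sum.distrib)
  finally show ?thesis .
qed

(* (2k - 1)!!, the 2k-th moment of a standard Gaussian *)
definition gauss_moment :: "nat \<Rightarrow> real" where
  "gauss_moment k = fact (2 * k) / (2 ^ k * fact k)"

lemma two_power_mult_fact_le_fact_double: "2 ^ m * fact m \<le> (fact (2 * m) :: real)"
proof (induction m)
  case (Suc m)
  have "(2::real) ^ Suc m * fact (Suc m) = (2 * real m + 2) * (2 ^ m * fact m)"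
    by (simp add: algebra_simps)
  also have "\<dots> \<le> ((2 * real m + 2) * (2 * real m + 1)) * fact (2 * m)"
    using Suc by (intro mult_mono) auto
  also have "\<dots> = fact (2 * Suc m)"
    by (simp add: algebra_simps)
  finally show ?case .
qed simp

lemma binomial_double_mult_gauss_moment_le:
  assumes "j \<le> k"
  shows "real ((2 * k) choose (2 * j)) * gauss_moment j \<le> real (k choose j) * gauss_moment k"
proof -
  obtain m where k: "k = j + m"
    using assms le_Suc_ex by blast
  have "real ((2 * k) choose (2 * j)) * gauss_moment j
      = fact (2 * k) / (fact (2 * m) * 2 ^ j * fact j)"
    using binomial_fact[of "2 * j" "2 * k"] by (simp add: gauss_moment_def k field_simps)
  also have "\<dots> \<le> fact (2 * k) / (2 ^ m * fact m * 2 ^ j * fact j)"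
    using two_power_mult_fact_le_fact_double[of m]
    by (intro divide_left_mono mult_right_mono mult_pos_pos) auto
  also have "\<dots> = real (k choose j) * gauss_moment k"
    by (simp add: binomial_fact k gauss_moment_def field_simps power_add)
  finally show ?thesis .
qed

lemma gbinomial_minus_half: "((-1/2 :: real) gchoose k) * (-2) ^ k = gauss_moment k / fact k"
proof -
  have "fact (2 * k) = (4 ^ k * pochhammer (1/2) k * fact k :: real)"
    by (simp add: fact_double power_mult)
  then show ?thesis
    by (simp add: gbinomial_pochhammer gauss_moment_def field_simps flip: power_mult_distrib)
qed

lemma power_add_plus_power_diff_even:
  fixes s r :: real
  shows "(s + r) ^ (2 * k) + (s - r) ^ (2 * k) =
         2 * (\<Sum>j\<le>k. real ((2 * k) choose (2 * j)) * (s\<^sup>2) ^ j * (r\<^sup>2) ^ (k - j))"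
proof -
  define g where
    "g i = (if even i then 2 * (real ((2 * k) choose i) * s ^ i * r ^ (2 * k - i)) else 0)" for i
  have "(s - r) ^ (2 * k) = (- s + r) ^ (2 * k)"
    using power_minus_even[where a = "r - s" and n = "2 * k"] by simp
  then have "(s + r) ^ (2 * k) + (s - r) ^ (2 * k) =
             (\<Sum>i\<le>2 * k. real ((2 * k) choose i) * (s ^ i + (- s) ^ i) * r ^ (2 * k - i))"
    unfolding binomial_ring[of s r] binomial_ring[of "- s" r]
    by (simp add: sum.distrib[symmetric] distrib_left distrib_right)
  also have "\<dots> = (\<Sum>i\<le>2 * k. g i)"
    by (intro sum.cong) (auto simp: g_def)
  also have "\<dots> = (\<Sum>i<2 * Suc k. g i)"
  proof -
    have "{..<2 * Suc k} = insert (Suc (2 * k)) {..2 * k}"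
      by auto
    then show ?thesis
      by (simp add: g_def)
  qed
  also have "\<dots> = (\<Sum>j<Suc k. g (2 * j))"
    using sum_split_even_odd[of g "\<lambda>_. 0" "Suc k"] by (simp add: g_def cong: if_cong)
  also have "\<dots> = 2 * (\<Sum>j\<le>k. real ((2 * k) choose (2 * j)) * (s\<^sup>2) ^ j * (r\<^sup>2) ^ (k - j))"
  proof -
    have "g (2 * j) = 2 * (real ((2 * k) choose (2 * j)) * (s\<^sup>2) ^ j * (r\<^sup>2) ^ (k - j))" for j
      by (simp add: g_def power_mult flip: diff_mult_distrib2)
    then show ?thesis
      by (simp add: lessThan_Suc_atMost sum_distrib_left)
  qed
  finally show ?thesis .
qed

lemma sum_sign_vectors_moment_le:
  assumes "r \<noteq> 0"
  shows "(\<Sum>v\<in>sign_vectors L r. ((\<Sum>j<L. v j)\<^sup>2) ^ k) \<le> 2 ^ L * (real L * r\<^sup>2) ^ k * gauss_moment k"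
proof (induction L arbitrary: k)
  case 0
  show ?case
    by (cases k) (auto simp: sign_vectors_def gauss_moment_def)
next
  case (Suc L)
  define M where "M j = (\<Sum>v\<in>sign_vectors L r. ((\<Sum>i<L. v i)\<^sup>2) ^ j)" for j
  define c where "c j = real ((2 * k) choose (2 * j)) * gauss_moment j" for j
  have sum_upd: "(\<Sum>i<Suc L. (v(L := y)) i) = (\<Sum>i<L. v i) + y" for v :: "nat \<Rightarrow> real" and y
  proof -
    have "(\<Sum>i<L. (v(L := y)) i) = (\<Sum>i<L. v i)"
      by (intro sum.cong) auto
    then show ?thesis
      by simp
  qed
  have term_le: "real ((2 * k) choose (2 * j)) * (r\<^sup>2) ^ (k - j) * M j
      \<le> 2 ^ L * (r\<^sup>2) ^ k * (real L ^ j * c j)" if "j \<le> k" for j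
  proof -
    have "real ((2 * k) choose (2 * j)) * (r\<^sup>2) ^ (k - j) * M j
        \<le> real ((2 * k) choose (2 * j)) * (r\<^sup>2) ^ (k - j) *
          (2 ^ L * (real L * r\<^sup>2) ^ j * gauss_moment j)"
      unfolding M_def by (intro mult_left_mono Suc.IH) auto
    also have "\<dots> = 2 ^ L * ((r\<^sup>2) ^ (k - j) * (r\<^sup>2) ^ j) * (real L ^ j * c j)"
      by (simp add: c_def power_mult_distrib mult_ac)
    also have "(r\<^sup>2) ^ (k - j) * (r\<^sup>2) ^ j = (r\<^sup>2) ^ k"
      using that by (simp flip: power_add)
    finally show ?thesis .
  qed
  have "(\<Sum>v\<in>sign_vectors (Suc L) r. ((\<Sum>i<Suc L. v i)\<^sup>2) ^ k)
      = (\<Sum>v\<in>sign_vectors L r. ((\<Sum>i<L. v i) + r) ^ (2 * k) + ((\<Sum>i<L. v i) - r) ^ (2 * k))"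
    by (simp add: sum_sign_vectors_Suc[OF assms] sum_upd power_mult)
  also have "\<dots> = 2 * (\<Sum>j\<le>k. real ((2 * k) choose (2 * j)) * (r\<^sup>2) ^ (k - j) * M j)"
    unfolding power_add_plus_power_diff_even M_def sum_distrib_left sum_distrib_right
    by (subst sum.swap) (simp add: mult_ac)
  also have "\<dots> \<le> 2 * (\<Sum>j\<le>k. 2 ^ L * (r\<^sup>2) ^ k * (real L ^ j * c j))"
    using term_le by (intro mult_left_mono sum_mono) auto
  also have "\<dots> \<le> 2 * (\<Sum>j\<le>k. 2 ^ L * (r\<^sup>2) ^ k *
                          (real L ^ j * (real (k choose j) * gauss_moment k)))"
    unfolding c_def by (intro mult_left_mono sum_mono binomial_double_mult_gauss_moment_le) auto
  also have "\<dots> = 2 ^ Suc L * (real (Suc L) * r\<^sup>2) ^ k * gauss_moment k"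
    using binomial_ring[of "real L" 1 k]
    by (simp add: sum_distrib_left sum_distrib_right power_mult_distrib mult_ac add.commute)
  finally show ?case .
qed

lemma sum_sign_vectors_exp_le:
  assumes "r \<noteq> 0" "L > 0" "0 \<le> lam" "lam < 1/2"
  shows "(\<Sum>v\<in>sign_vectors L r. exp (lam / (real L * r\<^sup>2) * (\<Sum>j<L. v j)\<^sup>2))
         \<le> 2 ^ L * (1 - 2 * lam) powr (-1/2)"
proof -
  define c where "c = lam / (real L * r\<^sup>2)"
  have "c \<ge> 0" "c * (real L * r\<^sup>2) = lam"
    using assms by (auto simp: c_def)
  have exp_series: "(\<lambda>k. \<Sum>v\<in>sign_vectors L r. (c * (\<Sum>j<L. v j)\<^sup>2) ^ k / fact k)
      sums (\<Sum>v\<in>sign_vectors L r. exp (c * (\<Sum>j<L. v j)\<^sup>2))"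
  proof (intro sums_sum)
    show "(\<lambda>k. x ^ k / fact k) sums exp x" for x :: real
      using exp_converges[of x] by (simp add: divide_inverse mult.commute)
  qed
  have binomial_series: "(\<lambda>k. 2 ^ L * (((-1/2) gchoose k) * (-2 * lam) ^ k))
      sums (2 ^ L * (1 - 2 * lam) powr (-1/2))"
    using gen_binomial_real[of "-2 * lam" "-1/2"] assms by (intro sums_mult) auto
  have "(\<Sum>v\<in>sign_vectors L r. (c * (\<Sum>j<L. v j)\<^sup>2) ^ k / fact k)
      \<le> 2 ^ L * (((-1/2) gchoose k) * (-2 * lam) ^ k)" for k
  proof -
    have "(\<Sum>v\<in>sign_vectors L r. (c * (\<Sum>j<L. v j)\<^sup>2) ^ k / fact k)
        = c ^ k / fact k * (\<Sum>v\<in>sign_vectors L r. ((\<Sum>j<L. v j)\<^sup>2) ^ k)"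
      by (simp add: sum_distrib_left power_mult_distrib)
    also have "\<dots> \<le> c ^ k / fact k * (2 ^ L * (real L * r\<^sup>2) ^ k * gauss_moment k)"
      using \<open>c \<ge> 0\<close> by (intro mult_left_mono sum_sign_vectors_moment_le assms) auto
    also have "\<dots> = 2 ^ L * (gauss_moment k / fact k) * (c * (real L * r\<^sup>2)) ^ k"
      by (simp add: power_mult_distrib)
    also have "\<dots> = 2 ^ L * (((-1/2) gchoose k) * (-2) ^ k) * lam ^ k"
      by (simp only: \<open>c * (real L * r\<^sup>2) = lam\<close> gbinomial_minus_half)
    also have "\<dots> = 2 ^ L * (((-1/2) gchoose k) * (-2 * lam) ^ k)"
      by (simp only: power_mult_distrib[of "-2" lam k] mult.assoc)
    finally show ?thesis .
  qed
  then have "(\<Sum>v\<in>sign_vectors L r. exp (c * (\<Sum>j<L. v j)\<^sup>2)) \<le> 2 ^ L * (1 - 2 * lam) powr (-1/2)"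
    by (intro sums_le[OF _ exp_series binomial_series])
  then show ?thesis
    unfolding c_def .
qed

section \<open>Lists of small average radius in the sign cube\<close>

definition sign_cube :: "nat \<Rightarrow> real \<Rightarrow> (nat \<Rightarrow> real) set" where
  "sign_cube n r = {x. (\<forall>i<n. x i \<in> {r, -r}) \<and> (\<forall>i\<ge>n. x i = 0)}"

lemma bij_betw_restrict_sign_cube:
  "bij_betw (\<lambda>x. restrict x {..<n}) (sign_cube n r) (sign_vectors n r)"
  by (rule bij_betw_byWitness[where f' = "\<lambda>v i. if i < n then v i else 0"])
     (auto simp: sign_cube_def sign_vectors_def PiE_def extensional_def)

lemma finite_sign_cube [simp]: "finite (sign_cube n r)"
  using bij_betw_finite[OF bij_betw_restrict_sign_cube] by simp

lemma card_sign_cube: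
  assumes "r \<noteq> 0"
  shows "card (sign_cube n r) = 2 ^ n"
proof -
  have "card {r, -r} = 2"
    using assms by simp
  then show ?thesis
    using bij_betw_same_card[OF bij_betw_restrict_sign_cube]
    by (simp add: sign_vectors_def card_PiE)
qed

lemma sqnorm_sign_cube:
  assumes "x \<in> sign_cube n r"
  shows "sqnorm n x = real n * r\<^sup>2"
proof -
  have "(\<Sum>i<n. (x i)\<^sup>2) = (\<Sum>i<n. r\<^sup>2)"
    using assms by (intro sum.cong) (auto simp: sign_cube_def)
  then show ?thesis
    by (simp add: sqnorm_def)
qed

lemma sign_cube_subset_ball: "sign_cube n r \<subseteq> euclid_ball n (sqrt (real n * r\<^sup>2))"
  by (auto simp: euclid_ball_def sqnorm_sign_cube) (simp add: sign_cube_def)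

lemma sum_tuples_sign_cube_prod:
  fixes g :: "real \<Rightarrow> real"
  shows "(\<Sum>t\<in>(\<Pi>\<^sub>E j\<in>{..<L}. sign_cube n r). \<Prod>k<n. g (\<Sum>j<L. t j k))
       = (\<Sum>v\<in>sign_vectors L r. g (\<Sum>j<L. v j)) ^ n"
proof -
  define transpose :: "(nat \<Rightarrow> nat \<Rightarrow> real) \<Rightarrow> nat \<Rightarrow> nat \<Rightarrow> real" where
    "transpose t = (\<lambda>k\<in>{..<n}. \<lambda>j\<in>{..<L}. t j k)" for t
  define G where "G u = (\<Prod>k<n. g (\<Sum>j<L. u k j))" for u :: "nat \<Rightarrow> nat \<Rightarrow> real"
  have "bij_betw transpose (\<Pi>\<^sub>E j\<in>{..<L}. sign_cube n r) (\<Pi>\<^sub>E k\<in>{..<n}. sign_vectors L r)"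
  proof (rule bij_betw_byWitness[where f' = "\<lambda>u. \<lambda>j\<in>{..<L}. \<lambda>k. if k < n then u k j else 0"])
    show "\<forall>t\<in>(\<Pi>\<^sub>E j\<in>{..<L}. sign_cube n r).
        (\<lambda>j\<in>{..<L}. \<lambda>k. if k < n then transpose t k j else 0) = t"
      by (force simp: transpose_def sign_cube_def PiE_iff extensional_def)
    show "\<forall>u\<in>(\<Pi>\<^sub>E k\<in>{..<n}. sign_vectors L r).
        transpose (\<lambda>j\<in>{..<L}. \<lambda>k. if k < n then u k j else 0) = u"
      by (force simp: transpose_def sign_vectors_def PiE_iff extensional_def)
    show "transpose ` (\<Pi>\<^sub>E j\<in>{..<L}. sign_cube n r) \<subseteq> (\<Pi>\<^sub>E k\<in>{..<n}. sign_vectors L r)"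
      by (force simp: transpose_def sign_cube_def sign_vectors_def PiE_iff)
    show "(\<lambda>u. \<lambda>j\<in>{..<L}. \<lambda>k. if k < n then u k j else 0) ` (\<Pi>\<^sub>E k\<in>{..<n}. sign_vectors L r)
        \<subseteq> (\<Pi>\<^sub>E j\<in>{..<L}. sign_cube n r)"
      by (force simp: sign_cube_def sign_vectors_def PiE_iff)
  qed
  then have "(\<Sum>t\<in>(\<Pi>\<^sub>E j\<in>{..<L}. sign_cube n r). G (transpose t))
      = (\<Sum>u\<in>(\<Pi>\<^sub>E k\<in>{..<n}. sign_vectors L r). G u)"
    by (rule sum.reindex_bij_betw)
  also have "\<dots> = (\<Prod>k<n. \<Sum>v\<in>sign_vectors L r. g (\<Sum>j<L. v j))"
    unfolding G_def by (rule prod_sum_PiE[symmetric]) auto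
  finally show ?thesis
    by (simp add: G_def transpose_def)
qed

lemma card_superlevel_le_exp_sum:
  fixes h :: "'a \<Rightarrow> real"
  assumes "finite A" "\<mu> \<ge> 0"
  shows "real (card {a\<in>A. c \<le> h a}) \<le> exp (- \<mu> * c) * (\<Sum>a\<in>A. exp (\<mu> * h a))"
proof -
  have "real (card {a\<in>A. c \<le> h a}) = (\<Sum>a\<in>{a\<in>A. c \<le> h a}. 1)"
    by simp
  also have "\<dots> \<le> (\<Sum>a\<in>{a\<in>A. c \<le> h a}. exp (\<mu> * (h a - c)))"
    using assms by (intro sum_mono) auto
  also have "\<dots> \<le> (\<Sum>a\<in>A. exp (\<mu> * (h a - c)))"
    using assms by (intro sum_mono2) auto
  also have "\<dots> = exp (- \<mu> * c) * (\<Sum>a\<in>A. exp (\<mu> * h a))"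
    by (simp add: sum_distrib_left right_diff_distrib flip: exp_add)
  finally show ?thesis .
qed

lemma card_subsets_le_card_inj_tuples:
  assumes "finite V"
  shows "card {S. S \<subseteq> V \<and> card S = L \<and> Q S}
       \<le> card {t\<in>(\<Pi>\<^sub>E j\<in>{..<L}. V). inj_on t {..<L} \<and> Q (t ` {..<L})}"
proof (rule surj_card_le)
  show "finite {t\<in>(\<Pi>\<^sub>E j\<in>{..<L}. V). inj_on t {..<L} \<and> Q (t ` {..<L})}"
    using assms by (simp add: finite_PiE)
  show "{S. S \<subseteq> V \<and> card S = L \<and> Q S}
      \<subseteq> (\<lambda>t. t ` {..<L}) ` {t\<in>(\<Pi>\<^sub>E j\<in>{..<L}. V). inj_on t {..<L} \<and> Q (t ` {..<L})}"
  proof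
    fix S assume S: "S \<in> {S. S \<subseteq> V \<and> card S = L \<and> Q S}"
    then obtain f where f: "bij_betw f {..<L} S"
      using ex_bij_betw_nat_finite[of S] assms finite_subset by (auto simp: atLeast0LessThan)
    then have "restrict f {..<L} ` {..<L} = S" "inj_on (restrict f {..<L}) {..<L}"
      by (auto simp: bij_betw_def inj_on_def)
    with f S show "S \<in> (\<lambda>t. t ` {..<L}) ` {t\<in>(\<Pi>\<^sub>E j\<in>{..<L}. V). inj_on t {..<L} \<and> Q (t ` {..<L})}"
      by (intro image_eqI[of _ _ "restrict f {..<L}"]) (auto simp: bij_betw_def)
  qed
qed

lemma avg_rad_sq_eq:
  assumes "finite S" "S \<noteq> {}"
  shows "avg_rad_sq n S = (\<Sum>x\<in>S. sqnorm n x) / real (card S) - sqnorm n (centroid n S)"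
proof -
  define c where "c = centroid n S"
  have "(\<Sum>x\<in>S. (x i - c i)\<^sup>2) = (\<Sum>x\<in>S. (x i)\<^sup>2) - real (card S) * (c i)\<^sup>2" if "i < n" for i
  proof -
    have "(\<Sum>x\<in>S. (x i - c i)\<^sup>2) = (\<Sum>x\<in>S. (x i)\<^sup>2) - 2 * c i * (\<Sum>x\<in>S. x i) + real (card S) * (c i)\<^sup>2"
      by (simp add: power2_diff sum.distrib sum_subtractf sum_distrib_left mult_ac)
    moreover have "(\<Sum>x\<in>S. x i) = real (card S) * c i"
      using that assms by (simp add: c_def centroid_def)
    ultimately show ?thesis
      by (simp add: power2_eq_square)
  qed
  note column = this
  have "(\<Sum>x\<in>S. sqnorm n (\<lambda>i. x i - c i)) = (\<Sum>i<n. \<Sum>x\<in>S. (x i - c i)\<^sup>2)"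
    unfolding sqnorm_def by (rule sum.swap)
  also have "\<dots> = (\<Sum>i<n. (\<Sum>x\<in>S. (x i)\<^sup>2) - real (card S) * (c i)\<^sup>2)"
    using column by (intro sum.cong) auto
  also have "\<dots> = (\<Sum>i<n. \<Sum>x\<in>S. (x i)\<^sup>2) - real (card S) * sqnorm n c"
    by (simp add: sqnorm_def sum_subtractf sum_distrib_left)
  also have "(\<Sum>i<n. \<Sum>x\<in>S. (x i)\<^sup>2) = (\<Sum>x\<in>S. sqnorm n x)"
    unfolding sqnorm_def by (rule sum.swap)
  finally show ?thesis
    using assms by (simp add: avg_rad_sq_def c_def diff_divide_distrib)
qed

lemma column_sums_large_if_avg_rad_sq_small:
  assumes t: "t \<in> (\<Pi>\<^sub>E j\<in>{..<L}. sign_cube n r)" "inj_on t {..<L}" and "L > 0"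
    and small: "avg_rad_sq n (t ` {..<L}) \<le> real n * N"
  shows "real L ^ 2 * real n * (r\<^sup>2 - N) \<le> (\<Sum>k<n. (\<Sum>j<L. t j k)\<^sup>2)"
proof -
  define S where "S = t ` {..<L}"
  have S: "finite S" "S \<noteq> {}" "card S = L" "S \<subseteq> sign_cube n r"
    using t \<open>L > 0\<close> by (auto simp: S_def card_image PiE_iff)
  have "(\<Sum>x\<in>S. x k) = (\<Sum>j<L. t j k)" for k
    unfolding S_def using sum.reindex[OF t(2), of "\<lambda>x. x k"] by simp
  then have "sqnorm n (centroid n S) = (\<Sum>k<n. (\<Sum>j<L. t j k)\<^sup>2) / real L ^ 2"
    unfolding sum_divide_distrib by (simp add: sqnorm_def centroid_def S power_divide)
  moreover have "(\<Sum>x\<in>S. sqnorm n x) = (\<Sum>x\<in>S. real n * r\<^sup>2)"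
    using S by (intro sum.cong) (auto simp: sqnorm_sign_cube)
  ultimately have "avg_rad_sq n S = real n * r\<^sup>2 - (\<Sum>k<n. (\<Sum>j<L. t j k)\<^sup>2) / real L ^ 2"
    using S \<open>L > 0\<close> by (simp add: avg_rad_sq_eq)
  then have "avg_rad_sq n S * real L ^ 2 = real n * r\<^sup>2 * real L ^ 2 - (\<Sum>k<n. (\<Sum>j<L. t j k)\<^sup>2)"
    using \<open>L > 0\<close> by (simp add: field_simps)
  moreover have "avg_rad_sq n S * real L ^ 2 \<le> real n * N * real L ^ 2"
    using small by (intro mult_right_mono) (auto simp: S_def)
  ultimately show ?thesis
    by (simp add: algebra_simps)
qed

lemma sum_tuples_exp_column_sums_le:
  assumes "r \<noteq> 0" "L > 0" "0 \<le> lam" "lam < 1/2"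
  shows "(\<Sum>t\<in>(\<Pi>\<^sub>E j\<in>{..<L}. sign_cube n r). exp (lam / (real L * r\<^sup>2) * (\<Sum>k<n. (\<Sum>j<L. t j k)\<^sup>2)))
       \<le> (2 ^ L * (1 - 2 * lam) powr (-1/2)) ^ n"
proof -
  define \<mu> where "\<mu> = lam / (real L * r\<^sup>2)"
  have "(\<Sum>t\<in>(\<Pi>\<^sub>E j\<in>{..<L}. sign_cube n r). exp (\<mu> * (\<Sum>k<n. (\<Sum>j<L. t j k)\<^sup>2)))
      = (\<Sum>v\<in>sign_vectors L r. exp (\<mu> * (\<Sum>j<L. v j)\<^sup>2)) ^ n"
    using sum_tuples_sign_cube_prod[of "\<lambda>x. exp (\<mu> * x\<^sup>2)"] by (simp add: sum_distrib_left exp_sum)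
  also have "\<dots> \<le> (2 ^ L * (1 - 2 * lam) powr (-1/2)) ^ n"
    unfolding \<mu>_def using assms by (intro power_mono sum_sign_vectors_exp_le sum_nonneg) auto
  finally show ?thesis
    unfolding \<mu>_def .
qed

lemma card_sign_cube_small_avg_rad_sq_le:
  assumes "r \<noteq> 0" "L > 0" and a: "a = real L * (r\<^sup>2 - N) / r\<^sup>2" "1 \<le> a"
  shows "real (card {S. S \<subseteq> sign_cube n r \<and> card S = L \<and> avg_rad_sq n S \<le> real n * N})
       \<le> 2 ^ (L * n) * exp (- real n * (a - 1 - ln a) / 2)"
proof -
  define T where "T = (\<Pi>\<^sub>E j\<in>{..<L}. sign_cube n r)"
  define col where "col t = (\<Sum>k<n. (\<Sum>j<L. t j k)\<^sup>2)" for t :: "nat \<Rightarrow> nat \<Rightarrow> real"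
  define thr where "thr = real L ^ 2 * real n * (r\<^sup>2 - N)"
  \<comment> \<open>lam minimises the Chernoff exponent - lam a - ln (1 - 2 lam) / 2\<close>
  define lam where "lam = (1 - 1 / a) / 2"
  define \<mu> where "\<mu> = lam / (real L * r\<^sup>2)"
  have lam: "0 \<le> lam" "lam < 1/2" "1 - 2 * lam = 1 / a"
    using \<open>1 \<le> a\<close> by (auto simp: lam_def field_simps)
  have "\<mu> * thr = lam * (real L * (r\<^sup>2 - N) / r\<^sup>2) * real n"
    using assms by (simp add: \<mu>_def thr_def power2_eq_square field_simps)
  also have "\<dots> = real n * (a - 1) / 2"
    using \<open>1 \<le> a\<close> by (simp add: lam_def flip: a(1)) (simp add: field_simps)
  finally have \<mu>_thr: "\<mu> * thr = real n * (a - 1) / 2" .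
  have "card {S. S \<subseteq> sign_cube n r \<and> card S = L \<and> avg_rad_sq n S \<le> real n * N}
      \<le> card {t\<in>T. inj_on t {..<L} \<and> avg_rad_sq n (t ` {..<L}) \<le> real n * N}"
    unfolding T_def by (rule card_subsets_le_card_inj_tuples) simp
  also have "\<dots> \<le> card {t\<in>T. thr \<le> col t}"
    using column_sums_large_if_avg_rad_sq_small \<open>L > 0\<close>
    by (intro card_mono) (auto simp: T_def thr_def col_def finite_PiE)
  finally have "real (card {S. S \<subseteq> sign_cube n r \<and> card S = L \<and> avg_rad_sq n S \<le> real n * N})
      \<le> exp (- \<mu> * thr) * (\<Sum>t\<in>T. exp (\<mu> * col t))"
    using card_superlevel_le_exp_sum[of T \<mu> thr col] lam assms
    by (simp add: T_def finite_PiE \<mu>_def)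
  also have "\<dots> \<le> exp (- \<mu> * thr) * (2 ^ L * (1 - 2 * lam) powr (-1/2)) ^ n"
    unfolding T_def col_def \<mu>_def using lam assms
    by (intro mult_left_mono sum_tuples_exp_column_sums_le) auto
  also have "(1 - 2 * lam) powr (-1/2) = exp (ln a / 2)"
    using \<open>1 \<le> a\<close> by (simp add: lam(3) powr_def ln_div)
  also have "exp (- \<mu> * thr) * (2 ^ L * exp (ln a / 2)) ^ n
      = 2 ^ (L * n) * exp (- real n * (a - 1 - ln a) / 2)"
    by (simp add: \<mu>_thr power_mult_distrib power_mult field_simps flip: exp_of_nat_mult exp_add)
  finally show ?thesis .
qed

section \<open>Expurgation\<close>

lemma binomial_mult_power_le:
  assumes "L \<le> m" "m \<le> q"
  shows "real (m choose L) * real q ^ L \<le> real (q choose L) * real m ^ L"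
proof -
  have "real (m - i) / real (L - i) * real q \<le> real (q - i) / real (L - i) * real m"
    if "i < L" for i
  proof -
    have "real i * real m \<le> real i * real q"
      using assms by (intro mult_left_mono) auto
    then have "real (m - i) * real q \<le> real (q - i) * real m"
      using that assms by (simp add: of_nat_diff algebra_simps)
    then show ?thesis
      unfolding times_divide_eq_left by (rule divide_right_mono) simp
  qed
  then have "(\<Prod>i<L. real (m - i) / real (L - i) * real q)
      \<le> (\<Prod>i<L. real (q - i) / real (L - i) * real m)"
    by (intro prod_mono) auto
  moreover have "real (k choose L) * real p ^ L = (\<Prod>i<L. real (k - i) / real (L - i) * real p)"
    if "L \<le> k" for k p :: nat
    using that
    by (simp only: binomial_altdef_of_nat atLeast0LessThan prod.distrib prod_constant card_lessThan)
  ultimately show ?thesis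
    using assms by simp
qed

lemma card_supersets_mult_binomial:
  assumes "finite V" "e \<subseteq> V" "card e = L" "L \<le> m" "m \<le> card V"
  shows "real (card {X. X \<subseteq> V \<and> card X = m \<and> e \<subseteq> X}) * real (card V choose L)
       = real (card V choose m) * real (m choose L)"
proof -
  have "finite e"
    using assms finite_subset by blast
  have "bij_betw (\<lambda>Y. Y \<union> e) {Y. Y \<subseteq> V - e \<and> card Y = m - L} {X. X \<subseteq> V \<and> card X = m \<and> e \<subseteq> X}"
  proof (rule bij_betw_byWitness[where f' = "\<lambda>X. X - e"])
    show "(\<lambda>Y. Y \<union> e) ` {Y. Y \<subseteq> V - e \<and> card Y = m - L} \<subseteq> {X. X \<subseteq> V \<and> card X = m \<and> e \<subseteq> X}"
    proof clarify
      fix Y assume "Y \<subseteq> V - e" "card Y = m - L"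
      moreover have "finite Y" "Y \<inter> e = {}"
        using \<open>Y \<subseteq> V - e\<close> \<open>finite V\<close> finite_subset by blast+
      ultimately show "Y \<union> e \<subseteq> V \<and> card (Y \<union> e) = m \<and> e \<subseteq> Y \<union> e"
        using assms \<open>finite e\<close> by (auto simp: card_Un_disjoint)
    qed
    show "(\<lambda>X. X - e) ` {X. X \<subseteq> V \<and> card X = m \<and> e \<subseteq> X} \<subseteq> {Y. Y \<subseteq> V - e \<and> card Y = m - L}"
      using assms \<open>finite e\<close> by (auto simp: card_Diff_subset)
  qed auto
  then have "card {X. X \<subseteq> V \<and> card X = m \<and> e \<subseteq> X} = (card V - L) choose (m - L)"
    using assms \<open>finite e\<close> by (simp add: bij_betw_same_card[symmetric] n_subsets card_Diff_subset)
  then show ?thesis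
    using choose_mult[OF \<open>L \<le> m\<close> \<open>m \<le> card V\<close>] by (simp flip: of_nat_mult)
qed

lemma sum_card_contained_mult_binomial:
  fixes E :: "'a set set"
  assumes "finite V" and E: "\<And>e. e \<in> E \<Longrightarrow> e \<subseteq> V \<and> card e = L" and "L \<le> m" "m \<le> card V"
  shows "(\<Sum>X | X \<subseteq> V \<and> card X = m. real (card {e\<in>E. e \<subseteq> X})) * real (card V choose L)
       = real (card E) * real (card V choose m) * real (m choose L)"
proof -
  define F where "F = {X. X \<subseteq> V \<and> card X = m}"
  have "finite F" "finite E"
    using E \<open>finite V\<close> by (auto simp: F_def intro: finite_subset[of E "Pow V"])
  have indicator_sum: "real (card {a\<in>A. P a}) = (\<Sum>a\<in>A. if P a then 1 else 0)" if "finite A"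
    for A :: "'b set" and P
    using that by (simp flip: sum.inter_filter)
  have "(\<Sum>X\<in>F. real (card {e\<in>E. e \<subseteq> X})) = (\<Sum>X\<in>F. \<Sum>e\<in>E. if e \<subseteq> X then 1 else 0)"
    using \<open>finite E\<close> by (simp add: indicator_sum)
  also have "\<dots> = (\<Sum>e\<in>E. \<Sum>X\<in>F. if e \<subseteq> X then 1 else 0)"
    by (rule sum.swap)
  also have "\<dots> = (\<Sum>e\<in>E. real (card {X\<in>F. e \<subseteq> X}))"
    using \<open>finite F\<close> by (simp add: indicator_sum)
  finally have "(\<Sum>X\<in>F. real (card {e\<in>E. e \<subseteq> X})) * real (card V choose L)
      = (\<Sum>e\<in>E. real (card {X\<in>F. e \<subseteq> X}) * real (card V choose L))"
    by (simp add: sum_distrib_right)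
  also have "\<dots> = real (card E) * real (card V choose m) * real (m choose L)"
    using card_supersets_mult_binomial[OF \<open>finite V\<close>] E assms by (simp add: F_def)
  finally show ?thesis
    by (simp add: F_def)
qed

lemma ex_subset_few_contained:
  fixes E :: "'a set set"
  assumes "finite V" and E: "\<And>e. e \<in> E \<Longrightarrow> e \<subseteq> V \<and> card e = L" and "L \<le> m" "m \<le> card V"
  shows "\<exists>X\<subseteq>V. card X = m \<and>
           real (card {e\<in>E. e \<subseteq> X}) * real (card V) ^ L \<le> real (card E) * real m ^ L"
proof -
  define F where "F = {X. X \<subseteq> V \<and> card X = m}"
  define f where "f X = real (card {e\<in>E. e \<subseteq> X})" for X
  have "finite F" "card F = card V choose m"
    using assms by (simp_all add: F_def n_subsets)
  then have "F \<noteq> {}"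
    using assms by auto
  then have "Min (f ` F) \<in> f ` F"
    using \<open>finite F\<close> by (intro Min_in) auto
  then obtain X where X: "X \<in> F" "f X = Min (f ` F)"
    by (metis imageE)
  have "real (card F) * f X \<le> (\<Sum>Y\<in>F. f Y)"
    using X \<open>finite F\<close> by (intro sum_bounded_below) simp
  then have "real (card V choose m) * (f X * real (card V choose L))
      \<le> (\<Sum>Y\<in>F. f Y) * real (card V choose L)"
    using \<open>card F = _\<close> by (simp add: mult_right_mono flip: mult.assoc)
  also have "\<dots> = real (card V choose m) * (real (card E) * real (m choose L))"
    using sum_card_contained_mult_binomial[OF assms] by (simp add: F_def f_def)
  finally have "f X * real (card V choose L) \<le> real (card E) * real (m choose L)"
    using assms by (simp add: mult_le_cancel_left_pos)
  then have "f X * real (card V choose L) * real (card V) ^ L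
      \<le> real (card E) * (real (m choose L) * real (card V) ^ L)"
    by (metis mult.assoc mult_right_mono zero_le_power of_nat_0_le_iff)
  also have "\<dots> \<le> real (card E) * (real (card V choose L) * real m ^ L)"
    using binomial_mult_power_le[OF assms(3,4)] by (intro mult_left_mono) auto
  finally have "f X * real (card V) ^ L \<le> real (card E) * real m ^ L"
    using assms by (simp add: mult_ac mult_le_cancel_left_pos)
  then show ?thesis
    using X(1) by (auto simp: F_def f_def)
qed

lemma ex_large_subset_avoiding:
  fixes E :: "'a set set"
  assumes "finite V" and E: "\<And>e. e \<in> E \<Longrightarrow> e \<subseteq> V \<and> card e = L" and "0 < L" "L \<le> m" "m \<le> card V"
  shows "\<exists>X\<subseteq>V. (\<forall>e\<in>E. \<not> e \<subseteq> X) \<and>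
           real m - real (card E) * (real m / real (card V)) ^ L \<le> real (card X)"
proof -
  obtain Y where Y: "Y \<subseteq> V" "card Y = m"
    and few: "real (card {e\<in>E. e \<subseteq> Y}) * real (card V) ^ L \<le> real (card E) * real m ^ L"
    using ex_subset_few_contained[OF assms(1) E assms(4,5)] by blast
  define B where "B = {e\<in>E. e \<subseteq> Y}"
  have "\<forall>e\<in>B. \<exists>x. x \<in> e"
  proof
    fix e assume "e \<in> B"
    then have "card e \<noteq> 0"
      using E \<open>0 < L\<close> by (auto simp: B_def)
    then show "\<exists>x. x \<in> e"
      by (auto simp: ex_in_conv)
  qed
  then obtain pick where pick: "\<And>e. e \<in> B \<Longrightarrow> pick e \<in> e"
    by metis
  have "finite Y" "finite B"
    using Y \<open>finite V\<close> finite_subset by (auto simp: B_def intro: finite_subset[of _ "Pow Y"])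
  have "card Y - card (pick ` B) \<le> card (Y - pick ` B)"
    using \<open>finite B\<close> by (intro diff_card_le_card_Diff) simp
  moreover have "card (pick ` B) \<le> card B"
    using \<open>finite B\<close> by (rule card_image_le)
  ultimately have "real m - real (card B) \<le> real (card (Y - pick ` B))"
    using Y by linarith
  moreover have "real (card B) \<le> real (card E) * real m ^ L / real (card V) ^ L"
    using few assms by (simp add: B_def pos_le_divide_eq)
  moreover have "\<not> e \<subseteq> Y - pick ` B" if "e \<in> E" for e
  proof
    assume "e \<subseteq> Y - pick ` B"
    then have "e \<in> B" "pick e \<in> e"
      using that pick by (auto simp: B_def)
    with \<open>e \<subseteq> Y - pick ` B\<close> show False
      by blast
  qed
  ultimately show ?thesis
    using Y by (intro exI[of _ "Y - pick ` B"]) (auto simp: power_divide)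
qed

section \<open>Achievable rates\<close>

lemma ex_avg_rad_list_decodable_sign_code:
  assumes "r \<noteq> 0" "0 < L" "L \<le> m" "m \<le> 2 ^ n"
    and a: "a = real L * (r\<^sup>2 - N) / r\<^sup>2" "1 \<le> a"
  shows "\<exists>C. avg_rad_list_decodable n (r\<^sup>2) N L C \<and>
             real m - real m ^ L * exp (- real n * (a - 1 - ln a) / 2) \<le> real (card C)"
proof -
  define V where "V = sign_cube n r"
  define E where "E = {S. S \<subseteq> V \<and> card S = L \<and> avg_rad_sq n S \<le> real n * N}"
  have "finite V" "card V = 2 ^ n"
    using assms by (simp_all add: V_def card_sign_cube)
  then obtain X where X: "X \<subseteq> V" "\<forall>e\<in>E. \<not> e \<subseteq> X"
    and large: "real m - real (card E) * (real m / real (card V)) ^ L \<le> real (card X)"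
    using ex_large_subset_avoiding[of V E L m] assms by (auto simp: E_def)
  have "real (card E) \<le> 2 ^ (L * n) * exp (- real n * (a - 1 - ln a) / 2)"
    unfolding E_def V_def by (rule card_sign_cube_small_avg_rad_sq_le[OF assms(1,2) a])
  then have "real (card E) * (real m / real (card V)) ^ L
      \<le> 2 ^ (L * n) * exp (- real n * (a - 1 - ln a) / 2) * (real m / 2 ^ n) ^ L"
    unfolding \<open>card V = 2 ^ n\<close> of_nat_power of_nat_numeral by (rule mult_right_mono) simp
  also have "\<dots> = real m ^ L * exp (- real n * (a - 1 - ln a) / 2)"
    by (simp add: power_divide mult.commute flip: power_mult)
  finally have "real m - real m ^ L * exp (- real n * (a - 1 - ln a) / 2) \<le> real (card X)"
    using large by linarith
  moreover have "avg_rad_list_decodable n (r\<^sup>2) N L X"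
    unfolding avg_rad_list_decodable_def
  proof (intro conjI allI impI)
    show "finite X"
      using X(1) \<open>finite V\<close> finite_subset by blast
    show "X \<subseteq> euclid_ball n (sqrt (real n * r\<^sup>2))"
      using X(1) sign_cube_subset_ball unfolding V_def by (rule subset_trans)
    show "real n * N < avg_rad_sq n S" if "S \<subseteq> X" "card S = L" for S
    proof -
      have "S \<notin> E" "S \<subseteq> V"
        using X that by blast+
      then show ?thesis
        using that by (simp add: E_def not_le)
    qed
  qed
  ultimately show ?thesis
    by blast
qed

lemma floor_half_minus_power_ge:
  assumes "2 \<le> L" "4 \<le> x" "m = nat \<lfloor>x / 2\<rfloor>"
  shows "x / 8 \<le> real m - real m ^ L / x ^ (L - 1)"
proof -
  have "real m = real_of_int \<lfloor>x / 2\<rfloor>"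
    using assms by simp
  then have m: "real m \<le> x / 2" "x / 2 - 1 \<le> real m"
    by linarith+
  obtain k where "L = Suc k"
    using assms by (cases L) auto
  then have "real m ^ L / x ^ (L - 1) = real m * (real m / x) ^ (L - 1)"
    by (simp add: power_divide)
  also have "\<dots> \<le> real m * (1 / 2) ^ (L - 1)"
    using m assms by (intro mult_left_mono power_mono) (auto simp: field_simps)
  also have "\<dots> \<le> real m * (1 / 2) ^ 1"
    using assms by (intro mult_left_mono power_decreasing) auto
  finally have "real m ^ L / x ^ (L - 1) \<le> real m / 2"
    by simp
  then show ?thesis
    using m assms by linarith
qed

lemma ex_avg_rad_list_decodable_card_ge:
  assumes "2 \<le> L" "0 < P" and a: "a = real L * (P - N) / P" "1 \<le> a"
    and exponent: "a - 1 - ln a = 2 * ((real L - 1) * \<tau>)"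
    and x: "2 * real L + 4 \<le> exp (real n * \<tau>)" "exp (real n * \<tau>) \<le> 2 ^ n"
  shows "\<exists>C. avg_rad_list_decodable n P N L C \<and> exp (real n * \<tau>) / 8 \<le> real (card C)"
proof -
  define x where "x = exp (real n * \<tau>)"
  define m where "m = nat \<lfloor>x / 2\<rfloor>"
  have "L \<le> m"
    using x by (simp add: m_def x_def le_nat_floor)
  moreover have "m \<le> 2 ^ n"
  proof -
    have "x / 2 < 2 ^ n + 1"
      using x zero_le_power[of "2 :: real" n] by (simp add: x_def)
    then show ?thesis
      by (simp add: m_def nat_le_iff floor_le_iff)
  qed
  moreover have "sqrt P \<noteq> 0" "(sqrt P)\<^sup>2 = P"
    using assms by auto
  ultimately obtain C where C: "avg_rad_list_decodable n P N L C"
    and card_C: "real m - real m ^ L * exp (- real n * (a - 1 - ln a) / 2) \<le> real (card C)"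
    using ex_avg_rad_list_decodable_sign_code[of "sqrt P" L m n a N] assms by auto
  have "exp (- real n * (a - 1 - ln a) / 2) = exp (- (real (L - 1) * (real n * \<tau>)))"
    unfolding exponent using \<open>2 \<le> L\<close> by (simp add: of_nat_diff mult_ac)
  also have "\<dots> = 1 / x ^ (L - 1)"
    by (simp add: x_def exp_minus exp_of_nat_mult inverse_eq_divide)
  finally have "x / 8 \<le> real m - real m ^ L * exp (- real n * (a - 1 - ln a) / 2)"
    using floor_half_minus_power_ge[of L x m] \<open>2 \<le> L\<close> x by (simp add: m_def x_def)
  with C card_C show ?thesis
    unfolding x_def by force
qed

lemma ex_avg_rad_list_decodable_code_rate_ge:
  assumes "2 \<le> L" "0 < P" "0 \<le> N"
    and a: "a = real L * (P - N) / P" "1 \<le> a"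
    and \<tau>: "\<tau> = (a - 1 - ln a) / (2 * (real L - 1))"
    and large: "2 * real L + 4 \<le> exp (real n * \<tau>)"
  shows "\<exists>C. avg_rad_list_decodable n P N L C \<and> \<tau> - ln 8 / real n \<le> code_rate n C"
proof -
  have "n > 0"
    using large assms by (cases n) auto
  have "real L * (P - N) / P \<le> real L * P / P"
    using assms by (intro divide_right_mono mult_left_mono) auto
  then have "a \<le> real L"
    using assms by simp
  moreover have "0 \<le> ln a" "0 < real L - 1"
    using assms by auto
  ultimately have "\<tau> \<le> 1 / 2"
    by (simp add: \<tau> field_simps)
  then have "exp (real n * \<tau>) \<le> exp (real n * (1 / 2))"
    by (intro exp_mono mult_left_mono) auto
  also have "\<dots> = exp (1 / 2) ^ n"
    by (rule exp_of_nat_mult)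
  also have "\<dots> \<le> 2 ^ n"
    using exp_bound_half[of "1 / 2 :: real"] by (intro power_mono) auto
  finally obtain C where C: "avg_rad_list_decodable n P N L C"
    and "exp (real n * \<tau>) / 8 \<le> real (card C)"
    using ex_avg_rad_list_decodable_card_ge[OF assms(1,2) a _ large] assms
    by (auto simp: field_simps)
  then have "ln (exp (real n * \<tau>) / 8) \<le> ln (real (card C))"
    by (intro ln_mono) auto
  then have "(real n * \<tau> - ln 8) / real n \<le> ln (real (card C)) / real n"
    by (intro divide_right_mono) (simp_all add: ln_div)
  then have "\<tau> - ln 8 / real n \<le> code_rate n C"
    using \<open>n > 0\<close> by (simp add: code_rate_def diff_divide_distrib)
  with C show ?thesis
    by blast
qed

lemma avg_rad_capacity_ge_limit:
  assumes "eventually (\<lambda>n. \<exists>C. avg_rad_list_decodable n P N L C \<and> f n \<le> code_rate n C) sequentially"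
    and "f \<longlonglongrightarrow> \<tau>"
  shows "ereal \<tau> \<le> avg_rad_capacity L P N"
proof -
  have "eventually (\<lambda>n. ereal (f n)
      \<le> (SUP C\<in>{C. avg_rad_list_decodable n P N L C}. ereal (code_rate n C))) sequentially"
    using assms(1) by (rule eventually_mono) (force intro: SUP_upper2)
  then have "limsup (\<lambda>n. ereal (f n)) \<le> avg_rad_capacity L P N"
    unfolding avg_rad_capacity_def by (rule Limsup_mono)
  moreover have "limsup (\<lambda>n. ereal (f n)) = ereal \<tau>"
    using assms(2) by (intro lim_imp_Limsup) (simp_all add: tendsto_ereal)
  ultimately show ?thesis
    by simp
qed

lemma avg_rad_list_decodable_singleton:
  assumes "2 \<le> L" "0 \<le> P"
  shows "avg_rad_list_decodable n P N L {\<lambda>_. 0}"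
  unfolding avg_rad_list_decodable_def
proof (intro conjI allI impI)
  show "{\<lambda>_. 0} \<subseteq> euclid_ball n (sqrt (real n * P))"
    using assms by (simp add: euclid_ball_def sqnorm_def)
  show "real n * N < avg_rad_sq n S" if "S \<subseteq> {\<lambda>_. 0}" "card S = L" for S
    using card_mono[OF _ that(1)] that(2) assms by simp
qed simp

lemma avg_rad_capacity_ge_exponent:
  assumes "2 \<le> L" "0 < P" "0 \<le> N"
    and a: "a = real L * (P - N) / P" "1 \<le> a"
    and \<tau>: "\<tau> = (a - 1 - ln a) / (2 * (real L - 1))"
  shows "ereal \<tau> \<le> avg_rad_capacity L P N"
proof (cases "\<tau> > 0")
  case True
  then have "eventually (\<lambda>n. 2 * real L + 4 \<le> exp (real n * \<tau>)) sequentially"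
    by real_asymp
  then have "eventually
      (\<lambda>n. \<exists>C. avg_rad_list_decodable n P N L C \<and> \<tau> - ln 8 / real n \<le> code_rate n C) sequentially"
    by (rule eventually_mono) (rule ex_avg_rad_list_decodable_code_rate_ge[OF assms])
  moreover have "(\<lambda>n. \<tau> - ln 8 / real n) \<longlonglongrightarrow> \<tau>"
    by real_asymp
  ultimately show ?thesis
    by (rule avg_rad_capacity_ge_limit)
next
  case False
  then have "avg_rad_list_decodable n P N L {\<lambda>_. 0} \<and> \<tau> \<le> code_rate n {\<lambda>_. 0}" for n
    using assms by (simp add: avg_rad_list_decodable_singleton code_rate_def)
  then show ?thesis
    by (intro avg_rad_capacity_ge_limit[where f = "\<lambda>_. \<tau>"] always_eventually) auto
qed

theorem mainTheorem6:
  fixes P N :: real and L :: nat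
  assumes "L \<ge> 2" and "P > 0" and "N > 0"
    and "N / P \<le> (real L - 1) / real L"
  shows "avg_rad_capacity L P N \<ge>
    ereal ((1/2) * (1 - real L * N / ((real L - 1) * P)
                    - (1 / (real L - 1)) * ln (real L * (P - N) / P)))"
proof -
  define a where "a = real L * (P - N) / P"
  have "1 \<le> a"
    using assms by (simp add: a_def field_simps)
  have half_rate: "(1/2) * (1 - (d + 1) * N / (d * P) - (1 / d) * l)
      = ((d + 1) * (P - N) / P - 1 - l) / (2 * d)" if "d > 0" for d l
    using that \<open>P > 0\<close> by (simp add: field_simps)
  have "0 < real L - 1"
    using assms by simp
  from half_rate[OF this, of "ln a"]
  have "(1/2) * (1 - real L * N / ((real L - 1) * P)
                  - (1 / (real L - 1)) * ln (real L * (P - N) / P))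
      = (a - 1 - ln a) / (2 * (real L - 1))"
    unfolding a_def diff_add_cancel .
  moreover have "ereal ((a - 1 - ln a) / (2 * (real L - 1))) \<le> avg_rad_capacity L P N"
    using assms by (intro avg_rad_capacity_ge_exponent[OF _ _ _ a_def \<open>1 \<le> a\<close>]) auto
  ultimately show ?thesis
    by (simp only:)
qed

end
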